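(* Let $(H_i)_{i=0}^\infty = (2^{\alpha_i}3^{\beta_i})_{i=0}^\infty$ be the increasing enumeration of $\mathcal{H}=\{2^\alpha3^\beta : \alpha,\beta\in\mathbb{N}_0\}$, and define $f\colon\mathbb{N}_0\to\{+1,-1\}$ by $f(0)=+1$ and $f(n)=(-1)^{\alpha_i+\beta_i}$ for $n\in\{H_i,H_i+1,\dots,H_{i+1}-1\}$, $i\in\mathbb{N}_0$. Then for almost all $n\in\mathbb{N}_0$ we have $f(n+1)=f(n)$, $f(2n)=-f(n)$ and $f(3n)=-f(n)$.
   Context: $\mathbb{N}_0=\{0,1,2,\dots\}$. A property holds for almost all $n\in\mathbb{N}_0$ if the set of $n$ where it fails has upper density $\limsup_{N\to\infty}|\cdot\cap\{0,\dots,N-1\}|/N$ equal to $0$. *)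

theory Defs
  imports Complex_Main "HOL-Library.Infinite_Set" "HOL-Library.Liminf_Limsup" "HOL-Library.Extended_Real"
begin

definition hamming :: "nat set" where
  "hamming = {2 ^ a * 3 ^ b | a b. True}"

definition H :: "nat \<Rightarrow> nat" where
  "H i = enumerate hamming i"

definition alpha_beta :: "nat \<Rightarrow> nat \<times> nat" where
  "alpha_beta i = (THE p. H i = 2 ^ fst p * 3 ^ snd p)"

definition alpha :: "nat \<Rightarrow> nat" where "alpha i = fst (alpha_beta i)"
definition beta :: "nat \<Rightarrow> nat" where "beta i = snd (alpha_beta i)"

definition f :: "nat \<Rightarrow> int" where
  "f n = (if n = 0 then 1
          else (let i = (THE i. H i \<le> n \<and> n < H (Suc i)) in (-1) ^ (alpha i + beta i)))"

definition upper_density :: "nat set \<Rightarrow> ereal" where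
  "upper_density A = limsup (\<lambda>N. ereal (real (card (A \<inter> {0..<N})) / real N))"

definition almost_all :: "(nat \<Rightarrow> bool) \<Rightarrow> bool" where
  "almost_all P \<longleftrightarrow> upper_density {n. \<not> P n} = 0"

end

(*
  For n >= 1, f n = (-1)^(a + b) where 2^a 3^b is the largest 3-smooth number not exceeding n.
  Hence f (n + 1) = f n unless n + 1 is 3-smooth, and below N there are only O((log N)^2)
  3-smooth numbers.  For {p, q} = {2, 3}, multiplying by p maps the largest 3-smooth number
  not exceeding n to the one not exceeding p n, and so flips the sign, unless a pure power q^d
  lands in between.
  Dirichlet's approximation theorem applied to log 3 / log 2 yields 3-smooth ratios arbitrarily
  close to 1, so every large y has a 3-smooth number in (y, (1 + delta) y]; applied to y = q^d / p
  this forces p n <= (1 + delta) q^d.  The n with p n that close to a power of q have upper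
  density O(delta).
*)
theory Submission
  imports
    Defs
    "HOL-Analysis.Kronecker_Approximation_Theorem"
    "HOL-Library.Log_Nat"
    "HOL-Real_Asymp.Real_Asymp"
begin

section \<open>Sets of asymptotic density zero\<close>

definition density_zero :: "nat set \<Rightarrow> bool" where
  "density_zero A \<longleftrightarrow> (\<lambda>N. real (card (A \<inter> {0..<N})) / real N) \<longlonglongrightarrow> 0"

lemma upper_density_eq_0_if_density_zero:
  assumes "density_zero A" shows "upper_density A = 0"
proof -
  have "(\<lambda>N. ereal (real (card (A \<inter> {0..<N})) / real N)) \<longlonglongrightarrow> ereal 0"
    using assms unfolding density_zero_def by (rule tendsto_ereal)
  then show ?thesis
    unfolding upper_density_def by (simp add: lim_imp_Limsup zero_ereal_def)
qed

lemma density_zero_subset: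
  assumes "B \<subseteq> A" "density_zero A" shows "density_zero B"
  unfolding density_zero_def
proof (rule tendsto_sandwich[OF _ _ tendsto_const])
  show "\<forall>\<^sub>F N in sequentially. real (card (B \<inter> {0..<N})) / real N \<le> real (card (A \<inter> {0..<N})) / real N"
    using assms(1) by (intro always_eventually allI divide_right_mono of_nat_mono card_mono) auto
qed (use assms(2) in \<open>auto simp: density_zero_def\<close>)

lemma density_zero_Un:
  assumes "density_zero A" "density_zero B" shows "density_zero (A \<union> B)"
  unfolding density_zero_def
proof (rule tendsto_sandwich[OF _ _ tendsto_const])
  have "card ((A \<union> B) \<inter> {0..<N}) \<le> card (A \<inter> {0..<N}) + card (B \<inter> {0..<N})" for N
    by (metis card_Un_le inf_sup_distrib2)
  then show "\<forall>\<^sub>F N in sequentially. real (card ((A \<union> B) \<inter> {0..<N})) / real N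
      \<le> real (card (A \<inter> {0..<N})) / real N + real (card (B \<inter> {0..<N})) / real N"
    by (intro always_eventually allI) (simp add: add_divide_distrib [symmetric] divide_right_mono flip: of_nat_add)
  show "(\<lambda>N. real (card (A \<inter> {0..<N})) / real N + real (card (B \<inter> {0..<N})) / real N) \<longlonglongrightarrow> 0"
    using tendsto_add[OF assms[unfolded density_zero_def]] by simp
qed auto

lemma density_zeroI:
  assumes "\<And>\<epsilon>. \<epsilon> > 0 \<Longrightarrow> \<exists>g. (\<lambda>N. g N / real N) \<longlonglongrightarrow> 0 \<and>
             (\<forall>\<^sub>F N in sequentially. real (card (A \<inter> {0..<N})) \<le> \<epsilon> * real N + g N)"
  shows "density_zero A"
  unfolding density_zero_def
proof (rule order_tendstoI)
  fix \<epsilon> :: real assume "\<epsilon> > 0"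
  then obtain g where g: "(\<lambda>N. g N / real N) \<longlonglongrightarrow> 0"
    and bound: "\<forall>\<^sub>F N in sequentially. real (card (A \<inter> {0..<N})) \<le> \<epsilon> / 2 * real N + g N"
    using assms[of "\<epsilon> / 2"] by auto
  have "\<forall>\<^sub>F N in sequentially. g N / real N < \<epsilon> / 2"
    using g \<open>\<epsilon> > 0\<close> by (intro order_tendstoD(2)) auto
  with bound eventually_gt_at_top[of 0]
  show "\<forall>\<^sub>F N in sequentially. real (card (A \<inter> {0..<N})) / real N < \<epsilon>"
  proof eventually_elim
    case (elim N)
    then show ?case by (simp add: divide_simps)
  qed
qed (intro always_eventually allI less_le_trans[OF _ divide_nonneg_nonneg], auto)

section \<open>3-smooth numbers and the function \<open>f\<close>\<close>

lemma pow2_mult_pow3_in_hamming [simp]: "2 ^ a * 3 ^ b \<in> hamming"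
  by (auto simp: hamming_def)

lemma hamming_pos: "h \<in> hamming \<Longrightarrow> h > 0"
  by (auto simp: hamming_def)

lemma hamming_eq_pow_mult_pow:
  assumes "{p, q} = {2, 3 :: nat}" shows "hamming = {p ^ a * q ^ b | a b. True}"
proof -
  have "p = 2 \<and> q = 3 \<or> p = 3 \<and> q = 2"
    using assms by (metis doubleton_eq_iff)
  then show ?thesis
    unfolding hamming_def by (auto simp: mult.commute; blast)
qed

lemma infinite_hamming: "infinite hamming"
  unfolding infinite_nat_iff_unbounded_le
  by (metis pow2_mult_pow3_in_hamming less_exp less_imp_le mult.right_neutral power_0)

lemma pow2_mult_pow3_eq_iff: "(2::nat) ^ a * 3 ^ b = 2 ^ c * 3 ^ d \<longleftrightarrow> a = c \<and> b = d"
proof -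
  have "multiplicity 2 ((2::nat) ^ a * 3 ^ b) = a" for a b
    by (simp add: multiplicity_decomposeI)
  moreover have "multiplicity 3 ((2::nat) ^ a * 3 ^ b) = b" for a b
    by (rule multiplicity_decomposeI[of _ _ _ "2 ^ a"])
       (auto simp: mult.commute dest: prime_dvd_power[rotated])
  ultimately show ?thesis by metis
qed

lemma H_in_hamming: "H i \<in> hamming"
  unfolding H_def using infinite_hamming by (rule enumerate_in_set)

lemma H_less_iff [simp]: "H i < H j \<longleftrightarrow> i < j"
  unfolding H_def using infinite_hamming by simp

lemma H_le_iff [simp]: "H i \<le> H j \<longleftrightarrow> i \<le> j"
  unfolding H_def using infinite_hamming by simp

lemma H_Ex: "h \<in> hamming \<Longrightarrow> \<exists>i. H i = h"
  unfolding H_def using infinite_hamming by (rule enumerate_Ex)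

lemma alpha_beta_eq:
  assumes "H i = 2 ^ a * 3 ^ b" shows "alpha_beta i = (a, b)"
  unfolding alpha_beta_def
  by (rule the_equality) (use assms in \<open>auto simp: pow2_mult_pow3_eq_iff prod_eq_iff\<close>)

definition hamming_floor :: "nat \<Rightarrow> nat" where
  "hamming_floor n = Max {h \<in> hamming. h \<le> n}"

lemma
  assumes "n \<ge> 1"
  shows hamming_floor_in_hamming: "hamming_floor n \<in> hamming"
    and hamming_floor_le: "hamming_floor n \<le> n"
proof -
  have "1 \<in> {h \<in> hamming. h \<le> n}"
    using assms pow2_mult_pow3_in_hamming[of 0 0] by simp
  then have "hamming_floor n \<in> {h \<in> hamming. h \<le> n}"
    unfolding hamming_floor_def by (intro Max_in) auto
  then show "hamming_floor n \<in> hamming" "hamming_floor n \<le> n" by auto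
qed

lemma hamming_floor_greatest: "h \<in> hamming \<Longrightarrow> h \<le> n \<Longrightarrow> h \<le> hamming_floor n"
  unfolding hamming_floor_def by (intro Max_ge) auto

lemma hamming_floor_eqI:
  assumes "h \<in> hamming" "h \<le> n" "\<And>h'. h' \<in> hamming \<Longrightarrow> h' \<le> n \<Longrightarrow> h' \<le> h"
  shows "hamming_floor n = h"
proof (rule antisym)
  have "n \<ge> 1"
    using assms(1,2) hamming_pos by fastforce
  then show "hamming_floor n \<le> h"
    by (intro assms(3) hamming_floor_in_hamming hamming_floor_le)
qed (use assms hamming_floor_greatest in auto)

lemma less_double_hamming_floor:
  assumes "n \<ge> 1" shows "n < 2 * hamming_floor n"
proof (rule ccontr)
  obtain a b where ab: "hamming_floor n = 2 ^ a * 3 ^ b"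
    using hamming_floor_in_hamming[OF assms] by (auto simp: hamming_def)
  assume "\<not> n < 2 * hamming_floor n"
  then have "2 ^ Suc a * 3 ^ b \<le> hamming_floor n"
    using ab by (intro hamming_floor_greatest pow2_mult_pow3_in_hamming) auto
  with ab show False by simp
qed

lemma f_eq_hamming_floor:
  assumes "n \<ge> 1" "hamming_floor n = 2 ^ a * 3 ^ b"
  shows "f n = (-1) ^ (a + b)"
proof -
  obtain i where i: "H i = hamming_floor n"
    using H_Ex hamming_floor_in_hamming[OF assms(1)] by blast
  have below_next: "n < H (Suc i)"
  proof (rule ccontr)
    assume "\<not> n < H (Suc i)"
    then have "H (Suc i) \<le> H i"
      unfolding i by (intro hamming_floor_greatest H_in_hamming) auto
    then show False by simp
  qed
  have "(THE j. H j \<le> n \<and> n < H (Suc j)) = i"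
  proof (rule the_equality)
    show "H i \<le> n \<and> n < H (Suc i)"
      using i hamming_floor_le[OF assms(1)] below_next by simp
  next
    fix j assume j: "H j \<le> n \<and> n < H (Suc j)"
    then have "j \<le> i"
      using hamming_floor_greatest[OF H_in_hamming] i by (metis H_le_iff)
    moreover have "i < Suc j"
      using j i hamming_floor_le[OF assms(1)] by (metis H_less_iff le_less_trans)
    ultimately show "j = i" by simp
  qed
  with assms i show ?thesis
    by (simp add: f_def alpha_def beta_def alpha_beta_eq)
qed

lemma hamming_floor_Suc:
  assumes "n \<ge> 1" "Suc n \<notin> hamming"
  shows "hamming_floor (Suc n) = hamming_floor n"
proof (rule hamming_floor_eqI)
  fix h assume "h \<in> hamming" "h \<le> Suc n"
  with assms(2) have "h \<le> n" by (cases "h = Suc n") auto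
  with \<open>h \<in> hamming\<close> show "h \<le> hamming_floor n"
    by (rule hamming_floor_greatest)
qed (use assms hamming_floor_in_hamming hamming_floor_le[of n] in auto)

lemma f_Suc_eq:
  assumes "n \<ge> 1" "Suc n \<notin> hamming"
  shows "f (Suc n) = f n"
proof -
  obtain a b where "hamming_floor n = 2 ^ a * 3 ^ b"
    using hamming_floor_in_hamming[OF assms(1)] by (auto simp: hamming_def)
  then show ?thesis
    using assms hamming_floor_Suc by (simp add: f_eq_hamming_floor)
qed

definition power_interlopers :: "nat \<Rightarrow> nat \<Rightarrow> nat set" where
  "power_interlopers p q = {n. \<exists>d. p * hamming_floor n < q ^ d \<and> q ^ d \<le> p * n}"

lemma hamming_floor_mult:
  assumes pq: "{p, q} = {2, 3}" and n: "n \<ge> 1" "n \<notin> power_interlopers p q"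
  shows "hamming_floor (p * n) = p * hamming_floor n"
proof -
  have ham: "hamming = {p ^ a * q ^ b | a b. True}"
    using pq by (rule hamming_eq_pow_mult_pow)
  have p: "p > 0"
    using pq by (metis doubleton_eq_iff gr0I zero_neq_numeral)
  obtain a b where ab: "hamming_floor n = p ^ a * q ^ b"
    using hamming_floor_in_hamming[OF n(1)] unfolding ham by blast
  have pn: "p * n \<ge> 1"
    using p n(1) by simp
  obtain c d where cd: "hamming_floor (p * n) = p ^ c * q ^ d"
    using hamming_floor_in_hamming[OF pn] unfolding ham by blast
  have "p * hamming_floor n = p ^ Suc a * q ^ b"
    using ab by simp
  then have "p * hamming_floor n \<in> hamming"
    unfolding ham by blast
  then have lower: "p * hamming_floor n \<le> hamming_floor (p * n)"
    using hamming_floor_le[OF n(1)] p by (intro hamming_floor_greatest) auto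
  show ?thesis
  proof (cases c)
    case 0
    then show ?thesis
      using lower n(2) cd hamming_floor_le[OF pn]
      unfolding power_interlopers_def by (auto simp: le_less)
  next
    case (Suc c')
    have "p ^ c' * q ^ d \<le> hamming_floor n"
      using ham cd Suc hamming_floor_le[OF pn] p
      by (intro hamming_floor_greatest) (auto simp: mult.assoc)
    then have "hamming_floor (p * n) \<le> p * hamming_floor n"
      using cd Suc p by (simp add: mult.assoc)
    with lower show ?thesis by simp
  qed
qed

lemma f_mult_eq_neg:
  assumes pq: "{p, q} = {2, 3}" and n: "n \<ge> 1" "n \<notin> power_interlopers p q"
  shows "f (p * n) = - f n"
proof -
  obtain a b where ab: "hamming_floor n = 2 ^ a * 3 ^ b"
    using hamming_floor_in_hamming[OF n(1)] by (auto simp: hamming_def)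
  have pn: "p * n \<ge> 1" "hamming_floor (p * n) = p * hamming_floor n"
    using pq n hamming_floor_mult[OF pq n] by (auto simp: doubleton_eq_iff)
  have "p = 2 \<or> p = 3"
    using pq by (auto simp: doubleton_eq_iff)
  then show ?thesis
  proof
    assume "p = 2"
    then have "hamming_floor (p * n) = 2 ^ Suc a * 3 ^ b"
      using pn ab by simp
    then have "f (p * n) = (-1) ^ (Suc a + b)"
      by (rule f_eq_hamming_floor[OF pn(1)])
    then show ?thesis
      using f_eq_hamming_floor[OF n(1) ab] by simp
  next
    assume "p = 3"
    then have "hamming_floor (p * n) = 2 ^ a * 3 ^ Suc b"
      using pn ab by simp
    then have "f (p * n) = (-1) ^ (a + Suc b)"
      by (rule f_eq_hamming_floor[OF pn(1)])
    then show ?thesis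
      using f_eq_hamming_floor[OF n(1) ab] by simp
  qed
qed

section \<open>Ratios of 3-smooth numbers accumulate at 1\<close>

lemma ex_power_ivl_real:
  fixes x y :: real
  assumes "x > 1" "y \<ge> 1"
  obtains m where "x ^ m \<le> y" "y < x ^ Suc m"
  using exists_least_lemma[of "\<lambda>m. y < x ^ m"] real_arch_pow[OF assms(1), of y] assms(2) by force

lemma power_products_in_short_interval:
  fixes p q a b :: nat
  defines "\<rho> \<equiv> real q ^ b / real p ^ a"
  assumes p: "p \<ge> 2" and \<rho>: "\<rho> > 1"
  shows "\<exists>Y. \<forall>y\<ge>Y. \<exists>x z. y < real (p ^ x * q ^ z) \<and> real (p ^ x * q ^ z) \<le> \<rho> * y"
proof -
  have p1: "real p > 1"
    using p by simp
  obtain K where K: "real p < \<rho> ^ K"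
    using real_arch_pow[OF \<rho>] by blast
  (* Start from the power p^m just below y and multiply by \<rho> until y is passed: as \<rho>^K > p,
     fewer than K steps are needed, so for y \<ge> p^(aK) the exponent of p stays nonnegative. *)
  have "\<exists>x z. y < real (p ^ x * q ^ z) \<and> real (p ^ x * q ^ z) \<le> \<rho> * y"
    if y: "y \<ge> real p ^ (a * K)" for y
  proof -
    have "y \<ge> 1"
      using y one_le_power[of "real p" "a * K"] p1 by linarith
    then obtain m where m: "real p ^ m \<le> y" "y < real p ^ Suc m"
      using ex_power_ivl_real[OF p1] by blast
    have pm: "real p ^ m > 0"
      using p1 by simp
    then obtain k where k: "\<rho> ^ k \<le> y / real p ^ m" "y / real p ^ m < \<rho> ^ Suc k"
      using ex_power_ivl_real[OF \<rho>, of "y / real p ^ m"] m(1) by auto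
    have "y / real p ^ m < real p"
      using m(2) pm by (simp add: divide_less_eq mult.commute)
    with k(1) K have "\<rho> ^ k < \<rho> ^ K"
      by linarith
    then have "k < K"
      using power_strict_increasing_iff[OF \<rho>] by blast
    have "real p ^ (a * K) < real p ^ Suc m"
      using y m(2) by linarith
    then have "a * K \<le> m"
      using power_strict_increasing_iff[OF p1] less_Suc_eq_le by blast
    with \<open>k < K\<close> have am: "a * Suc k \<le> m"
      by (meson Suc_leI mult_le_mono2 order_trans)
    have "real p ^ m = real p ^ (m - a * Suc k) * real p ^ (a * Suc k)"
      using am by (simp flip: power_add)
    moreover have "\<rho> ^ Suc k = real q ^ (b * Suc k) / real p ^ (a * Suc k)"
      by (simp only: \<rho>_def power_divide power_mult)
    ultimately have "real p ^ m * \<rho> ^ Suc k = real (p ^ (m - a * Suc k) * q ^ (b * Suc k))"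
      using p1 by simp
    moreover have "y < real p ^ m * \<rho> ^ Suc k"
      using k(2) pm by (simp add: divide_less_eq mult.commute)
    moreover have "real p ^ m * \<rho> ^ Suc k \<le> \<rho> * y"
      using k(1) pm \<rho> by (simp add: le_divide_eq mult.left_commute mult.commute)
    ultimately show ?thesis
      by metis
  qed
  then show ?thesis by blast
qed

lemma ln3_ln2_combination_small:
  assumes "\<delta> > 0"
  obtains a b :: nat where "b * ln 3 - a * ln 2 \<noteq> (0::real)" "\<bar>b * ln 3 - a * ln 2\<bar> < \<delta>"
proof -
  define \<theta> where "\<theta> = ln 3 / ln (2::real)"
  have "\<theta> > 1"
    by (simp add: \<theta>_def)
  obtain N :: nat where N: "N > 0" "1 / real N < min 1 \<delta>"
    using assms real_arch_inverse[of "min 1 \<delta>"] by (auto simp: inverse_eq_divide)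
  obtain h k :: int where k: "k > 0" and hk: "\<bar>of_int k * \<theta> - of_int h\<bar> < 1 / real N"
    using Dirichlet_approx[OF N(1)] by blast
  have "of_int k * \<theta> \<ge> \<theta>"
    using k \<open>\<theta> > 1\<close> by simp
  moreover have "of_int k * \<theta> - of_int h < 1"
    using hk N(2) by (auto simp: abs_less_iff)
  ultimately have "h > 0"
    using \<open>\<theta> > 1\<close> by linarith
  define d where "d = real (nat k) * ln 3 - real (nat h) * ln 2"
  have d_eq: "d = ln 2 * (of_int k * \<theta> - of_int h)"
    using k \<open>h > 0\<close> by (simp add: d_def \<theta>_def algebra_simps)
  have "\<bar>d\<bar> \<le> \<bar>of_int k * \<theta> - of_int h\<bar>"
    unfolding d_eq abs_mult using ln_2_less_1 by (intro mult_left_le_one_le) auto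
  with hk N(2) have "\<bar>d\<bar> < \<delta>"
    by linarith
  moreover have "d \<noteq> 0"
  proof
    assume "d = 0"
    then have "ln (real (3 ^ nat k)) = ln (real (2 ^ nat h))"
      by (simp add: d_def ln_realpow)
    then have "real (3 ^ nat k) = real (2 ^ nat h)"
      by (subst (asm) ln_inj_iff) auto
    then have "(3::nat) ^ nat k = 2 ^ nat h"
      by (simp only: of_nat_eq_iff)
    then have "even ((3::nat) ^ nat k) = even ((2::nat) ^ nat h)"
      by simp
    then show False
      using \<open>h > 0\<close> by simp
  qed
  ultimately show thesis
    using that[where a="nat h" and b="nat k"] by (simp add: d_def)
qed

lemma pow3_pow2_ratio_close_to_1:
  assumes "\<epsilon> > 0"
  obtains p q a b :: nat
  where "{p, q} = {2, 3}" "1 < real q ^ b / real p ^ a" "real q ^ b / real p ^ a < 1 + \<epsilon>"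
proof -
  have "ln (1 + \<epsilon>) > 0"
    using assms by simp
  then obtain a b :: nat
    where d: "b * ln 3 - a * ln 2 \<noteq> (0::real)" "\<bar>b * ln 3 - a * ln 2\<bar> < ln (1 + \<epsilon>)"
    by (rule ln3_ln2_combination_small)
  define d :: real where "d = b * ln 3 - a * ln 2"
  have "exp \<bar>d\<bar> < exp (ln (1 + \<epsilon>))"
    using d(2) unfolding d_def by simp
  then have small: "exp \<bar>d\<bar> < 1 + \<epsilon>"
    using assms by simp
  have exp_d: "exp d = real 3 ^ b / real 2 ^ a"
    by (simp add: d_def exp_diff exp_of_nat_mult)
  consider "d > 0" | "d < 0"
    using d(1) unfolding d_def by linarith
  then show thesis
  proof cases
    case 1
    then have "1 < exp d" "exp d < 1 + \<epsilon>"
      using small by simp_all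
    then show thesis
      by (intro that[where p=2 and q=3 and a=a and b=b]) (simp_all add: exp_d)
  next
    case 2
    then have "1 < exp (- d)" "exp (- d) < 1 + \<epsilon>"
      using small by simp_all
    then show thesis
      by (intro that[where p=3 and q=2 and a=b and b=a]) (simp_all add: exp_minus exp_d insert_commute)
  qed
qed

lemma hamming_in_short_interval:
  assumes "\<epsilon> > 0"
  shows "\<exists>Y. \<forall>y\<ge>Y. \<exists>h\<in>hamming. y < real h \<and> real h \<le> (1 + \<epsilon>) * y"
proof -
  obtain p q a b :: nat where pq: "{p, q} = {2, 3}"
    and \<rho>: "1 < real q ^ b / real p ^ a" "real q ^ b / real p ^ a < 1 + \<epsilon>"
    using pow3_pow2_ratio_close_to_1[OF assms] .
  have "p \<ge> 2"
    using pq by (auto simp: doubleton_eq_iff)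
  then obtain Y where Y: "\<forall>y\<ge>Y. \<exists>x z. y < real (p ^ x * q ^ z) \<and> real (p ^ x * q ^ z) \<le> real q ^ b / real p ^ a * y"
    using power_products_in_short_interval \<rho>(1) by blast
  have "\<exists>h\<in>hamming. y < real h \<and> real h \<le> (1 + \<epsilon>) * y" if "y \<ge> max Y 0" for y
  proof -
    have "y \<ge> Y"
      using that by simp
    then obtain x z where xz: "y < real (p ^ x * q ^ z)" "real (p ^ x * q ^ z) \<le> real q ^ b / real p ^ a * y"
      using Y by blast
    moreover have "real q ^ b / real p ^ a * y \<le> (1 + \<epsilon>) * y"
      using \<rho>(2) that by (intro mult_right_mono) auto
    moreover have "p ^ x * q ^ z \<in> hamming"
      unfolding hamming_eq_pow_mult_pow[OF pq] by blast
    ultimately show ?thesis by force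
  qed
  then show ?thesis by blast
qed

section \<open>Counting the exceptional sets\<close>

lemma floorlog_le_log_plus_1:
  assumes "b > 1" "x > 0" shows "real (floorlog b x) \<le> log b x + 1"
proof -
  have "log b x \<ge> 0"
    using assms by simp
  then show ?thesis
    using assms by (simp add: floorlog_def)
qed

lemma card_hamming_atMost:
  assumes "N \<ge> 1" shows "real (card {h \<in> hamming. h \<le> N}) \<le> (log 2 N + 1) ^ 2"
proof -
  define L where "L = floorlog 2 N"
  have small: "x < L" if "2 ^ x \<le> N" for x
    using floorlog_ge_SucI[OF that] unfolding L_def by simp
  have "{h \<in> hamming. h \<le> N} \<subseteq> (\<lambda>(a, b). 2 ^ a * 3 ^ b) ` ({..<L} \<times> {..<L})"
  proof
    fix h assume "h \<in> {h \<in> hamming. h \<le> N}"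
    then obtain a b where h: "h = 2 ^ a * 3 ^ b" "h \<le> N"
      unfolding hamming_def by auto
    have "(2::nat) ^ b \<le> 3 ^ b"
      by (rule power_mono) auto
    moreover have "(2::nat) ^ a \<le> h" "(3::nat) ^ b \<le> h"
      using h by simp_all
    ultimately have "(2::nat) ^ a \<le> N" "(2::nat) ^ b \<le> N"
      using h by linarith+
    then show "h \<in> (\<lambda>(a, b). 2 ^ a * 3 ^ b) ` ({..<L} \<times> {..<L})"
      using h small by auto
  qed
  then have "card {h \<in> hamming. h \<le> N} \<le> card ({..<L} \<times> {..<L})"
    by (rule surj_card_le[rotated]) auto
  then have "real (card {h \<in> hamming. h \<le> N}) \<le> real L ^ 2"
    by (simp add: power2_eq_square flip: of_nat_mult)
  also have "\<dots> \<le> (log 2 N + 1) ^ 2"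
    using floorlog_le_log_plus_1[of 2 N] assms unfolding L_def by (intro power_mono) auto
  finally show ?thesis .
qed

lemma density_zero_hamming_pred: "density_zero {n. Suc n \<in> hamming}"
proof (rule density_zeroI)
  fix \<epsilon> :: real assume "\<epsilon> > 0"
  have bound: "real (card ({n. Suc n \<in> hamming} \<inter> {0..<N})) \<le> \<epsilon> * real N + (log 2 N + 1) ^ 2"
    if "N \<ge> 1" for N
  proof -
    have "card ({n. Suc n \<in> hamming} \<inter> {0..<N}) = card (Suc ` ({n. Suc n \<in> hamming} \<inter> {0..<N}))"
      by (simp add: card_image)
    also have "\<dots> \<le> card {h \<in> hamming. h \<le> N}"
      by (intro card_mono) auto
    finally have "real (card ({n. Suc n \<in> hamming} \<inter> {0..<N})) \<le> (log 2 N + 1) ^ 2"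
      using card_hamming_atMost[OF that] by linarith
    moreover have "\<epsilon> * real N \<ge> 0"
      using \<open>\<epsilon> > 0\<close> by simp
    ultimately show ?thesis
      by linarith
  qed
  show "\<exists>g. (\<lambda>N. g N / real N) \<longlonglongrightarrow> 0 \<and>
      (\<forall>\<^sub>F N in sequentially. real (card ({n. Suc n \<in> hamming} \<inter> {0..<N})) \<le> \<epsilon> * real N + g N)"
  proof (intro exI[of _ "\<lambda>N. (log 2 (real N) + 1) ^ 2"] conjI)
    show "(\<lambda>N. (log 2 (real N) + 1) ^ 2 / real N) \<longlonglongrightarrow> 0"
      by real_asymp
  qed (unfold eventually_sequentially, use bound in blast)
qed

lemma card_le_interval_length_plus_1:
  assumes "finite S" "d \<ge> 0" "\<And>n. n \<in> S \<Longrightarrow> a \<le> real n \<and> real n \<le> a + d"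
  shows "real (card S) \<le> d + 1"
proof (cases "S = {}")
  case False
  have "card S \<le> card {Min S..Max S}"
    using assms(1) by (intro card_mono) auto
  moreover have "Min S \<le> Max S"
    using Min_in[OF assms(1) False] Max_ge[OF assms(1)] by blast
  ultimately have "real (card S) \<le> real (Max S) + 1 - real (Min S)"
    by (simp add: of_nat_diff)
  moreover have "a \<le> real (Min S)" "real (Max S) \<le> a + d"
    using assms(1,3) False by auto
  ultimately show ?thesis
    by linarith
qed (use assms(2) in simp)

lemma sum_powers_le_power:
  fixes x :: real assumes "x \<ge> 2" shows "(\<Sum>j<L. x ^ j) \<le> x ^ L"
proof (induction L)
  case (Suc L)
  then have "(\<Sum>j<Suc L. x ^ j) \<le> 2 * x ^ L"
    by simp
  also have "\<dots> \<le> x ^ Suc L"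
    using assms by (simp add: mult_right_mono)
  finally show ?case .
qed simp

lemma sum_powers_below_floorlog:
  assumes "q \<ge> 2" "M > 0"
  shows "(\<Sum>j<floorlog q M. real q ^ j) \<le> real q * real M"
proof -
  have "q ^ floorlog q M \<le> q * M"
    using floorlog_bounds[OF assms(2), of q] assms(1)
    by (cases "floorlog q M") (auto simp: Suc_le_eq)
  then have "real q ^ floorlog q M \<le> real q * real M"
    by (simp flip: of_nat_power of_nat_mult)
  with sum_powers_le_power[of "real q" "floorlog q M"] assms(1) show ?thesis
    by simp
qed

definition near_powers :: "nat \<Rightarrow> nat \<Rightarrow> real \<Rightarrow> nat set" where
  "near_powers q c \<delta> = {n. \<exists>j. real q ^ j \<le> real c * real n \<and> real c * real n \<le> (1 + \<delta>) * real q ^ j}"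

lemma card_near_powers_le:
  fixes q c N :: nat and \<delta> :: real
  assumes q: "q \<ge> 2" and c: "c \<ge> 1" and \<delta>: "\<delta> \<ge> 0" and N: "N \<ge> 1"
  shows "real (card (near_powers q c \<delta> \<inter> {0..<N})) \<le> \<delta> * real q * real N + log q (real c * real N) + 1"
proof -
  define L where "L = floorlog q (c * N)"
  have cN: "c * N > 0"
    using c N by simp
  define S where "S j = {n. real q ^ j / c \<le> real n \<and> real n \<le> real q ^ j / c + \<delta> * real q ^ j / c} \<inter> {0..<N}" for j
  have "near_powers q c \<delta> \<inter> {0..<N} \<subseteq> (\<Union>j<L. S j)"
  proof
    fix n assume "n \<in> near_powers q c \<delta> \<inter> {0..<N}"
    then obtain j where j: "real q ^ j \<le> real c * real n" "real c * real n \<le> (1 + \<delta>) * real q ^ j" "n < N"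
      unfolding near_powers_def by auto
    have "real c * real n \<le> real c * real N"
      using j(3) by (intro mult_left_mono) auto
    with j(1) have "real (q ^ j) \<le> real (c * N)"
      by simp
    then have "q ^ j \<le> c * N"
      by (simp only: of_nat_le_iff)
    then have "j < L"
      using floorlog_ge_SucI[of q j "c * N"] q unfolding L_def by simp
    moreover have "n \<in> S j"
      using j c by (simp add: S_def field_simps)
    ultimately show "n \<in> (\<Union>j<L. S j)" by blast
  qed
  then have "real (card (near_powers q c \<delta> \<inter> {0..<N})) \<le> real (card (\<Union>j<L. S j))"
    by (intro of_nat_mono card_mono) (auto simp: S_def)
  also have "\<dots> \<le> (\<Sum>j<L. real (card (S j)))"
    using card_UN_le[of "{..<L}" S] by (simp flip: of_nat_sum)
  also have "\<dots> \<le> (\<Sum>j<L. \<delta> * real q ^ j / c + 1)"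
    using \<delta> by (intro sum_mono card_le_interval_length_plus_1) (auto simp: S_def)
  also have "\<dots> = \<delta> / c * (\<Sum>j<L. real q ^ j) + real L"
    by (simp add: sum.distrib sum_distrib_left)
  also have "\<dots> \<le> \<delta> / c * (real q * (c * N)) + (log q (c * N) + 1)"
    using sum_powers_below_floorlog[OF q cN] floorlog_le_log_plus_1[of q "c * N"] q cN \<delta>
    unfolding L_def by (intro add_mono mult_left_mono) auto
  also have "\<dots> = \<delta> * real q * real N + log q (real c * real N) + 1"
    using c by simp
  finally show ?thesis .
qed

lemma power_interlopers_subset_near_powers:
  assumes p: "p \<ge> 2" and "\<delta> > 0"
  obtains Z where "power_interlopers p q \<subseteq> {..<Z} \<union> near_powers q p \<delta>"
proof -
  obtain Y where Y: "\<forall>y\<ge>Y. \<exists>h\<in>hamming. y < real h \<and> real h \<le> (1 + \<delta>) * y"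
    using hamming_in_short_interval[OF \<open>\<delta> > 0\<close>] by blast
  have "n \<in> {..<nat \<lceil>p * Y\<rceil>} \<union> near_powers q p \<delta>" if n: "n \<in> power_interlopers p q" for n
  proof -
    obtain d where d: "p * hamming_floor n < q ^ d" "q ^ d \<le> p * n"
      using n unfolding power_interlopers_def by blast
    then have "0 < p * n"
      by linarith
    then have "n \<ge> 1"
      by simp
    show ?thesis
    proof (cases "real q ^ d / p \<ge> Y")
      case True
      then obtain h where h: "h \<in> hamming" "real q ^ d / p < real h" "real h \<le> (1 + \<delta>) * (real q ^ d / p)"
        using Y by blast
      have "real (q ^ d) < real (p * h)"
        using h(2) p by (simp add: field_simps)
      with d(1) have "p * hamming_floor n < p * h"
        by linarith
      then have "n < h"
        using hamming_floor_greatest[OF h(1), of n] by (metis mult_le_mono2 not_le leD)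
      then have "real p * real n \<le> real p * real h"
        by (intro mult_left_mono) auto
      also have "\<dots> \<le> (1 + \<delta>) * real q ^ d"
        using h(3) p by (simp add: field_simps)
      finally have "real p * real n \<le> (1 + \<delta>) * real q ^ d" .
      moreover have "real q ^ d \<le> real p * real n"
        using d(2) by (simp flip: of_nat_power of_nat_mult)
      ultimately show ?thesis
        unfolding near_powers_def by blast
    next
      case False
      have "n < p * hamming_floor n"
        using less_double_hamming_floor[OF \<open>n \<ge> 1\<close>] mult_le_mono1[OF p] by (rule less_le_trans)
      with d(1) have "real n < real q ^ d"
        by (simp flip: of_nat_power)
      moreover have "real q ^ d < p * Y"
        using False p by (simp add: field_simps)
      ultimately have "real n < p * Y"
        by linarith
      then show ?thesis
        by (simp add: zless_nat_eq_int_zless less_ceiling_iff)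
    qed
  qed
  then show thesis
    using that by blast
qed

lemma density_zero_power_interlopers:
  assumes p: "p \<ge> 2" and q: "q \<ge> 2"
  shows "density_zero (power_interlopers p q)"
proof (rule density_zeroI)
  fix \<epsilon> :: real assume "\<epsilon> > 0"
  define \<delta> where "\<delta> = \<epsilon> / q"
  have "\<delta> > 0"
    using \<open>\<epsilon> > 0\<close> q by (simp add: \<delta>_def)
  then obtain Z where cover: "power_interlopers p q \<subseteq> {..<Z} \<union> near_powers q p \<delta>"
    using power_interlopers_subset_near_powers[OF p] by blast
  have bound: "real (card (power_interlopers p q \<inter> {0..<N})) \<le> \<epsilon> * real N + (Z + log q (real p * real N) + 1)"
    if "N \<ge> 1" for N
  proof -
    have "card (power_interlopers p q \<inter> {0..<N}) \<le> card ({..<Z} \<inter> {0..<N} \<union> near_powers q p \<delta> \<inter> {0..<N})"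
      using cover by (intro card_mono) auto
    also have "\<dots> \<le> card ({..<Z} \<inter> {0..<N}) + card (near_powers q p \<delta> \<inter> {0..<N})"
      by (rule card_Un_le)
    also have "\<dots> \<le> Z + card (near_powers q p \<delta> \<inter> {0..<N})"
      using card_mono[of "{..<Z}" "{..<Z} \<inter> {0..<N}"] by simp
    finally have "real (card (power_interlopers p q \<inter> {0..<N})) \<le> Z + real (card (near_powers q p \<delta> \<inter> {0..<N}))"
      by simp
    also have "\<dots> \<le> Z + (\<delta> * real q * real N + log q (real p * real N) + 1)"
      using card_near_powers_le[of q p \<delta> N] p q \<open>\<delta> > 0\<close> that by simp
    finally show ?thesis
      using q by (simp add: \<delta>_def)
  qed
  show "\<exists>g. (\<lambda>N. g N / real N) \<longlonglongrightarrow> 0 \<and>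
      (\<forall>\<^sub>F N in sequentially. real (card (power_interlopers p q \<inter> {0..<N})) \<le> \<epsilon> * real N + g N)"
  proof (intro exI[of _ "\<lambda>N. Z + log q (real p * real N) + 1"] conjI)
    show "(\<lambda>N. (Z + log q (real p * real N) + 1) / real N) \<longlonglongrightarrow> 0"
      using p q by real_asymp
  qed (unfold eventually_sequentially, use bound in blast)
qed

theorem lemma4p2:
  shows "almost_all (\<lambda>n. f (n + 1) = f n \<and> f (2 * n) = - f n \<and> f (3 * n) = - f n)"
proof -
  let ?E = "{n. Suc n \<in> hamming} \<union> power_interlopers 2 3 \<union> power_interlopers 3 2"
  have "{n. \<not> (f (n + 1) = f n \<and> f (2 * n) = - f n \<and> f (3 * n) = - f n)} \<subseteq> ?E"
  proof
    fix n assume n: "n \<in> {n. \<not> (f (n + 1) = f n \<and> f (2 * n) = - f n \<and> f (3 * n) = - f n)}"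
    show "n \<in> ?E"
    proof (rule ccontr)
      assume "n \<notin> ?E"
      moreover have "n \<ge> 1"
        using \<open>n \<notin> ?E\<close> pow2_mult_pow3_in_hamming[of 0 0] by (cases n) auto
      ultimately have "f (n + 1) = f n" "f (2 * n) = - f n" "f (3 * n) = - f n"
        using f_Suc_eq f_mult_eq_neg[of 2 3 n] f_mult_eq_neg[of 3 2 n] by (simp_all add: insert_commute)
      with n show False by simp
    qed
  qed
  moreover have "density_zero ?E"
    by (intro density_zero_Un density_zero_hamming_pred density_zero_power_interlopers) auto
  ultimately show ?thesis
    unfolding almost_all_def by (blast intro: upper_density_eq_0_if_density_zero density_zero_subset)
qed

end
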